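(* Suppose QEPmin is in the easy case. For $k\le k_{\max}$ let $\mu^{(k)}$ be the optimal value of rQEPmin (equivalently of rLGopt), let $(\mu^{(k)},x^{(k)})$ be the minimizer of rLGopt and $u^{(k)}=Q_kx^{(k)}$. Then $(\mu^{(k_{\max})},u^{(k_{\max})})$ solves LGopt, and $v^{(k_{\max})}=u^{(k_{\max})}+n_0$ is the unique minimizer of CRQopt.
   Context: Let $A\in\mathbb{R}^{n\times n}$ be symmetric, $C\in\mathbb{R}^{n\times m}$ ($m<n$) full column rank, $b\in\mathbb{R}^m$, $n_0=C(C^{\top}C)^{-1}b$ with $\|n_0\|<1$, $\gamma=\sqrt{1-\|n_0\|^2}$, $P=I-C(C^{\top}C)^{-1}C^{\top}$ (orthogonal projector onto $\mathcal N(C^{\top})$), $b_0=PAn_0\neq0$. CRQopt: minimize $v^{\top}Av$ s.t. $v^{\top}v=1$, $C^{\top}v=b$. LGopt: minimize $\lambda$ over $(\lambda,u)$ with $(PAP-\lambda I)u=-b_0$, $\|u\|=\gamma$, $u\in\mathcal N(C^{\top})$. QEPmin: minimize $\lambda$ over $(\lambda,z)$, $\lambda\in\mathbb{R}$, $0\ne z\in\mathcal N(C^{\top})$, $(PAP-\lambda I)^2z=\gamma^{-2}b_0b_0^{\top}z$; it is in the hard case if it has a minimizer with $b_0^{\top}z=0$, and in the easy case otherwise. Lanczos process with $M=PAP$: $q_0=0$, $\beta_1=\|b_0\|$, $q_1=b_0/\|b_0\|$, for $j=1,2,\dots$: $\alpha_j=q_j^{\top}Mq_j$, $\widehat q_{j+1}=Mq_j-\alpha_jq_j-\beta_jq_{j-1}$,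 $\beta_{j+1}=\|\widehat q_{j+1}\|$, $q_{j+1}=\widehat q_{j+1}/\beta_{j+1}$ when $\beta_{j+1}>0$; $k_{\max}$ is the smallest $k$ with $\beta_{k+1}=0$. $Q_k=[q_1,\dots,q_k]$, $T_k=Q_k^{\top}PAPQ_k$ (tridiagonal). rLGopt: minimize $\lambda$ over $(\lambda,x)\in\mathbb{R}\times\mathbb{R}^k$ with $(T_k-\lambda I)x=-\|b_0\|e_1$, $\|x\|=\gamma$. rQEPmin: minimize $\lambda$ over $\lambda\in\mathbb{R}$, $0\ne w\in\mathbb{R}^k$ with $(T_k-\lambda I)^2w=\gamma^{-2}\|b_0\|^2e_1e_1^{\top}w$. *)

theory Defs
  imports "HOL-Analysis.Analysis"
begin

definition n0 :: "real^'m^'n \<Rightarrow> real^'m \<Rightarrow> real^'n" where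
  "n0 C b = C *v (matrix_inv (transpose C ** C) *v b)"

definition gam :: "real^'m^'n \<Rightarrow> real^'m \<Rightarrow> real" where
  "gam C b = sqrt (1 - (norm (n0 C b))^2)"

definition Pproj :: "real^'m^'n \<Rightarrow> real^'n^'n" where
  "Pproj C = mat 1 - C ** matrix_inv (transpose C ** C) ** transpose C"

definition b0 :: "real^'n^'n \<Rightarrow> real^'m^'n \<Rightarrow> real^'m \<Rightarrow> real^'n" where
  "b0 A C b = Pproj C *v (A *v n0 C b)"

definition Mmat :: "real^'n^'n \<Rightarrow> real^'m^'n \<Rightarrow> real^'n^'n" where
  "Mmat A C = Pproj C ** A ** Pproj C"

text \<open>Lanczos process with matrix M and start vector r (= b0).
  lanczos M r j = (q_j, q_(j+1), beta_(j+1)), with q_0 = 0.\<close>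

fun lanczos :: "real^'n^'n \<Rightarrow> real^'n \<Rightarrow> nat \<Rightarrow> ((real^'n) \<times> (real^'n) \<times> real)" where
  "lanczos M r 0 = (0, (1 / norm r) *\<^sub>R r, norm r)"
| "lanczos M r (Suc j) =
     (let (qp, q, \<beta>) = lanczos M r j;
          \<alpha> = q \<bullet> (M *v q);
          qh = M *v q - \<alpha> *\<^sub>R q - \<beta> *\<^sub>R qp;
          \<beta>' = norm qh
      in (q, (1 / \<beta>') *\<^sub>R qh, \<beta>'))"

definition lz_q :: "real^'n^'n \<Rightarrow> real^'n \<Rightarrow> nat \<Rightarrow> real^'n" where
  "lz_q M r j = fst (lanczos M r j)"

text \<open>beta_j for j \<ge> 1\<close>
definition lz_beta :: "real^'n^'n \<Rightarrow> real^'n \<Rightarrow> nat \<Rightarrow> real" where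
  "lz_beta M r j = snd (snd (lanczos M r (j - 1)))"

definition kmax :: "real^'n^'n \<Rightarrow> real^'n \<Rightarrow> nat" where
  "kmax M r = (LEAST k. 1 \<le> k \<and> lz_beta M r (k + 1) = 0)"

text \<open>T_k = Q_k^T M Q_k, entries indexed by i, j in {1..k}\<close>
definition Tk :: "real^'n^'n \<Rightarrow> real^'n \<Rightarrow> nat \<Rightarrow> nat \<Rightarrow> real" where
  "Tk M r i j = lz_q M r i \<bullet> (M *v lz_q M r j)"

text \<open>Q_k x for x in R^k (x represented as nat \<Rightarrow> real, coordinates 1..k)\<close>
definition Qmul :: "real^'n^'n \<Rightarrow> real^'n \<Rightarrow> nat \<Rightarrow> (nat \<Rightarrow> real) \<Rightarrow> real^'n" where
  "Qmul M r k x = (\<Sum>j\<in>{1..k}. x j *\<^sub>R lz_q M r j)"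

definition rLG_feasible :: "real^'n^'n \<Rightarrow> real^'n \<Rightarrow> real \<Rightarrow> nat \<Rightarrow> real \<Rightarrow> (nat \<Rightarrow> real) \<Rightarrow> bool" where
  "rLG_feasible M r g k mu x \<longleftrightarrow>
     (\<forall>i. i \<notin> {1..k} \<longrightarrow> x i = 0) \<and>
     (\<forall>i\<in>{1..k}. (\<Sum>j\<in>{1..k}. Tk M r i j * x j) - mu * x i = - (if i = 1 then norm r else 0)) \<and>
     sqrt (\<Sum>i\<in>{1..k}. (x i)^2) = g"

definition rLG_minimizer :: "real^'n^'n \<Rightarrow> real^'n \<Rightarrow> real \<Rightarrow> nat \<Rightarrow> real \<Rightarrow> (nat \<Rightarrow> real) \<Rightarrow> bool" where
  "rLG_minimizer M r g k mu x \<longleftrightarrow> rLG_feasible M r g k mu x \<and>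
     (\<forall>mu' x'. rLG_feasible M r g k mu' x' \<longrightarrow> mu \<le> mu')"

definition LG_feasible :: "real^'n^'n \<Rightarrow> real^'m^'n \<Rightarrow> real^'m \<Rightarrow> real \<Rightarrow> real^'n \<Rightarrow> bool" where
  "LG_feasible A C b mu u \<longleftrightarrow>
     (Mmat A C - mu *\<^sub>R mat 1) *v u = - b0 A C b \<and> norm u = gam C b \<and> transpose C *v u = 0"

definition LG_solution :: "real^'n^'n \<Rightarrow> real^'m^'n \<Rightarrow> real^'m \<Rightarrow> real \<Rightarrow> real^'n \<Rightarrow> bool" where
  "LG_solution A C b mu u \<longleftrightarrow> LG_feasible A C b mu u \<and>
     (\<forall>mu' u'. LG_feasible A C b mu' u' \<longrightarrow> mu \<le> mu')"

definition QEP_feasible :: "real^'n^'n \<Rightarrow> real^'m^'n \<Rightarrow> real^'m \<Rightarrow> real \<Rightarrow> real^'n \<Rightarrow> bool" where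
  "QEP_feasible A C b mu z \<longleftrightarrow> z \<noteq> 0 \<and> transpose C *v z = 0 \<and>
     ((Mmat A C - mu *\<^sub>R mat 1) ** (Mmat A C - mu *\<^sub>R mat 1)) *v z
       = (1 / (gam C b)^2) *\<^sub>R ((b0 A C b \<bullet> z) *\<^sub>R b0 A C b)"

definition QEP_minimizer :: "real^'n^'n \<Rightarrow> real^'m^'n \<Rightarrow> real^'m \<Rightarrow> real \<Rightarrow> real^'n \<Rightarrow> bool" where
  "QEP_minimizer A C b mu z \<longleftrightarrow> QEP_feasible A C b mu z \<and>
     (\<forall>mu' z'. QEP_feasible A C b mu' z' \<longrightarrow> mu \<le> mu')"

definition QEP_hard_case :: "real^'n^'n \<Rightarrow> real^'m^'n \<Rightarrow> real^'m \<Rightarrow> bool" where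
  "QEP_hard_case A C b \<longleftrightarrow> (\<exists>mu z. QEP_minimizer A C b mu z \<and> b0 A C b \<bullet> z = 0)"

definition QEP_easy_case :: "real^'n^'n \<Rightarrow> real^'m^'n \<Rightarrow> real^'m \<Rightarrow> bool" where
  "QEP_easy_case A C b \<longleftrightarrow> \<not> QEP_hard_case A C b"

definition CRQ_feasible :: "real^'m^'n \<Rightarrow> real^'m \<Rightarrow> real^'n \<Rightarrow> bool" where
  "CRQ_feasible C b v \<longleftrightarrow> v \<bullet> v = 1 \<and> transpose C *v v = b"

definition CRQ_minimizer :: "real^'n^'n \<Rightarrow> real^'m^'n \<Rightarrow> real^'m \<Rightarrow> real^'n \<Rightarrow> bool" where
  "CRQ_minimizer A C b v \<longleftrightarrow> CRQ_feasible C b v \<and>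
     (\<forall>v'. CRQ_feasible C b v' \<longrightarrow> v \<bullet> (A *v v) \<le> v' \<bullet> (A *v v'))"

end

theory Submission
  imports Defs
begin

(* Write a feasible v as v = n0 + u with u in N(C^T). Since n0 is orthogonal to N(C^T),
   CRQopt becomes the minimisation of u'Mu + 2 b0'u, M = PAP, over the sphere
   ||u|| = gamma of N(C^T). By compactness a minimiser u exists; its first- and second-order
   conditions give (M - mu I) u = -b0 with M - mu I positive semidefinite on N(C^T), and such
   a mu is the least value of LGopt. In the easy case M - mu I is even positive definite, for
   a null vector of it would be a minimiser of QEPmin orthogonal to b0. Then u is the unique
   minimiser, and since M - mu I is injective on N(C^T) and maps the M-invariant Krylov space
   span {q_1, ..., q_kmax}, which contains b0, onto itself, u lies in that Krylov space.
   In the orthonormal Lanczos basis of this space the equations of LGopt are exactly those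
   of rLGopt, so rLGopt at k = kmax has the same optimal value mu and the solution Q x = u. *)

declare transpose_matrix_vector [simp del]

lemma transpose_diff: "transpose (A - B) = transpose A - transpose (B :: 'a::ring^'n^'m)"
  by (simp add: transpose_def vec_eq_iff)

lemma inner_matrix_vector_transpose:
  fixes A :: "real^'m^'n"
  shows "x \<bullet> (A *v y) = (transpose A *v x) \<bullet> y"
  by (metis dot_lmul_matrix inner_commute transpose_matrix_vector)

lemma symmetric_matrix_inner:
  fixes A :: "real^'n^'n"
  assumes "transpose A = A"
  shows "x \<bullet> (A *v y) = (A *v x) \<bullet> y"
  using inner_matrix_vector_transpose[of x A y] assms by simp

lemma matrix_minus_scaled_identity_apply:
  fixes X :: "real^'n^'n"
  shows "(X - \<mu> *\<^sub>R mat 1) *v x = X *v x - \<mu> *\<^sub>R x"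
  by (simp add: matrix_vector_mult_diff_rdistrib flip: scaleR_matrix_vector_assoc)

lemma matrix_inv_right:
  fixes G :: "'a::semiring_1^'n^'n"
  assumes "invertible G"
  shows "G ** matrix_inv G = mat 1"
proof -
  have "\<exists>H. G ** H = mat 1 \<and> H ** G = mat 1"
    using assms unfolding invertible_def by blast
  from someI_ex[OF this] show ?thesis
    unfolding matrix_inv_def by auto
qed

lemma transpose_matrix_inv_symmetric:
  fixes G :: "'a::comm_semiring_1^'n^'n"
  assumes "invertible G" and "transpose G = G"
  shows "transpose (matrix_inv G) = matrix_inv G"
proof -
  have left_inv: "transpose (matrix_inv G) ** G = mat 1"
    using arg_cong[OF matrix_inv_right[OF assms(1)], of transpose] assms(2)
    by (simp add: matrix_transpose_mul)
  have "transpose (matrix_inv G) = transpose (matrix_inv G) ** (G ** matrix_inv G)"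
    by (simp add: matrix_inv_right[OF assms(1)])
  also have "\<dots> = matrix_inv G"
    by (simp add: matrix_mul_assoc left_inv)
  finally show ?thesis .
qed

lemma invertible_gram_matrix:
  fixes C :: "real^'m^'n"
  assumes "rank C = CARD('m)"
  shows "invertible (transpose C ** C)"
proof -
  have C_ker: "\<forall>x. C *v x = 0 \<longrightarrow> x = 0"
    using assms
    by (simp add: full_rank_injective flip: matrix_left_invertible_injective matrix_left_invertible_ker)
  have "x = 0" if "(transpose C ** C) *v x = 0" for x
  proof -
    have "(C *v x) \<bullet> (C *v x) = 0"
      using that by (simp add: inner_matrix_vector_transpose[of "C *v x"] matrix_vector_mul_assoc)
    then show "x = 0" using C_ker by simp
  qed
  then show ?thesis
    by (simp add: invertible_left_inverse matrix_left_invertible_ker)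
qed

lemma nonneg_quadratic_linear_coeff_zero:
  fixes a b :: real
  assumes "\<And>t. 0 \<le> t * a + t\<^sup>2 * b"
  shows "a = 0"
proof (rule ccontr)
  assume "a \<noteq> 0"
  define K where "K = \<bar>b\<bar> + 1"
  have "0 < K" "b < K" unfolding K_def by auto
  have "(- a / K) * a + (- a / K)\<^sup>2 * b = a\<^sup>2 * (b - K) / K\<^sup>2"
    using \<open>0 < K\<close> by (simp add: field_simps power2_eq_square)
  also have "\<dots> < 0"
    using \<open>a \<noteq> 0\<close> \<open>b < K\<close> \<open>0 < K\<close> by (simp add: divide_neg_pos mult_pos_neg)
  finally show False using assms[of "- a / K"] by simp
qed

lemma linear_inj_on_subspace_surj:
  fixes f :: "'a::euclidean_space \<Rightarrow> 'a"
  assumes "linear f" and "subspace K" and "inj_on f K" and "f ` K \<subseteq> K"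
  shows "f ` K = K"
proof -
  have "dim (f ` K) = dim K"
    using dim_image_eq[OF assms(1), of K] assms(2,3) by (metis span_eq_iff)
  then show ?thesis
    using subspace_dim_equal[OF linear_subspace_image[OF assms(1,2)] assms(2,4)] by simp
qed

section \<open>The projector onto the null space of \<open>C\<^sup>T\<close>\<close>

locale full_column_rank =
  fixes C :: "real^'m^'n"
  assumes rank_C: "rank C = CARD('m)"
begin

lemma transpose_C_gram_inv: "transpose C *v (C *v (matrix_inv (transpose C ** C) *v y)) = y"
  using matrix_inv_right[OF invertible_gram_matrix[OF rank_C]]
  by (simp add: matrix_vector_mul_assoc matrix_mul_assoc)

lemma Pproj_apply: "Pproj C *v x = x - C *v (matrix_inv (transpose C ** C) *v (transpose C *v x))"
  unfolding Pproj_def by (simp add: matrix_vector_mult_diff_rdistrib flip: matrix_vector_mul_assoc)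

lemma transpose_Pproj: "transpose (Pproj C) = Pproj C"
  using transpose_matrix_inv_symmetric[OF invertible_gram_matrix[OF rank_C]]
  by (simp add: Pproj_def transpose_diff matrix_transpose_mul matrix_mul_assoc)

lemma Pproj_in_kernel: "transpose C *v (Pproj C *v x) = 0"
  by (simp add: Pproj_apply matrix_vector_mult_diff_distrib transpose_C_gram_inv)

lemma Pproj_kernel: "transpose C *v x = 0 \<Longrightarrow> Pproj C *v x = x"
  by (simp add: Pproj_apply)

lemma transpose_n0: "transpose C *v n0 C b = b"
  by (simp add: n0_def transpose_C_gram_inv)

lemma kernel_orthogonal_n0: "transpose C *v u = 0 \<Longrightarrow> u \<bullet> n0 C b = 0"
  by (simp add: n0_def inner_matrix_vector_transpose)

lemma subspace_kernel: "subspace {u. transpose C *v u = 0}"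
  by (auto simp: subspace_def matrix_vector_right_distrib matrix_vector_mult_scaleR)

lemma transpose_Mmat: "transpose A = A \<Longrightarrow> transpose (Mmat A C) = Mmat A C"
  by (simp add: Mmat_def matrix_transpose_mul transpose_Pproj matrix_mul_assoc)

lemma Mmat_in_kernel: "transpose C *v (Mmat A C *v x) = 0"
  by (simp add: Mmat_def Pproj_in_kernel flip: matrix_vector_mul_assoc)

lemma inner_Mmat_kernel:
  assumes "transpose C *v x = 0" and "transpose C *v y = 0"
  shows "x \<bullet> (Mmat A C *v y) = x \<bullet> (A *v y)"
proof -
  have "x \<bullet> (Pproj C *v z) = x \<bullet> z" for z
    using inner_matrix_vector_transpose[of x "Pproj C" z] assms(1)
    by (simp add: transpose_Pproj Pproj_kernel)
  then show ?thesis
    using assms(2) by (simp add: Mmat_def Pproj_kernel flip: matrix_vector_mul_assoc)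
qed

lemma b0_in_kernel: "transpose C *v b0 A C b = 0"
  by (simp add: b0_def Pproj_in_kernel)

lemma inner_b0_kernel: "transpose C *v u = 0 \<Longrightarrow> u \<bullet> b0 A C b = u \<bullet> (A *v n0 C b)"
  using inner_matrix_vector_transpose[of u "Pproj C"]
  by (simp add: b0_def transpose_Pproj Pproj_kernel)

end

section \<open>A quadratic function on a sphere in an invariant subspace\<close>

locale sphere_qp =
  fixes M :: "real^'n^'n" and c :: "real^'n" and S :: "(real^'n) set" and \<gamma> :: real
  assumes symmetric_M: "transpose M = M"
    and subspace_S: "subspace S"
    and M_S: "x \<in> S \<Longrightarrow> M *v x \<in> S"
    and c_S: "c \<in> S"
    and c_nonzero: "c \<noteq> 0"
    and \<gamma>_pos: "0 < \<gamma>"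
begin

definition shift :: "real \<Rightarrow> real^'n \<Rightarrow> real^'n" where
  "shift \<mu> x = M *v x - \<mu> *\<^sub>R x"

definition objective :: "real^'n \<Rightarrow> real" where
  "objective u = u \<bullet> (M *v u) + 2 * (c \<bullet> u)"

definition feasible_sphere :: "(real^'n) set" where
  "feasible_sphere = {u \<in> S. norm u = \<gamma>}"

definition lg_feasible :: "real \<Rightarrow> real^'n \<Rightarrow> bool" where
  "lg_feasible \<mu> u \<longleftrightarrow> u \<in> S \<and> shift \<mu> u = - c \<and> norm u = \<gamma>"

definition qep_feasible :: "real \<Rightarrow> real^'n \<Rightarrow> bool" where
  "qep_feasible \<mu> z \<longleftrightarrow>
     z \<in> S \<and> z \<noteq> 0 \<and> shift \<mu> (shift \<mu> z) = (1 / \<gamma>\<^sup>2) *\<^sub>R ((c \<bullet> z) *\<^sub>R c)"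

definition hard_case :: bool where
  "hard_case \<longleftrightarrow>
     (\<exists>\<mu> z. qep_feasible \<mu> z \<and> (\<forall>\<mu>' z'. qep_feasible \<mu>' z' \<longrightarrow> \<mu> \<le> \<mu>') \<and> c \<bullet> z = 0)"

definition shift_psd :: "real \<Rightarrow> bool" where
  "shift_psd \<mu> \<longleftrightarrow> (\<forall>y\<in>S. 0 \<le> y \<bullet> shift \<mu> y)"

definition shift_pd :: "real \<Rightarrow> bool" where
  "shift_pd \<mu> \<longleftrightarrow> (\<forall>y\<in>S. y \<noteq> 0 \<longrightarrow> 0 < y \<bullet> shift \<mu> y)"

lemma inner_M_commute: "x \<bullet> (M *v y) = y \<bullet> (M *v x)"
  using symmetric_matrix_inner[OF symmetric_M] by (simp add: inner_commute)

lemma inner_shift_commute: "x \<bullet> shift \<mu> y = y \<bullet> shift \<mu> x"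
  by (simp add: shift_def inner_diff_right inner_M_commute inner_commute)

lemma shift_add: "shift \<mu> (x + y) = shift \<mu> x + shift \<mu> y"
  and shift_diff: "shift \<mu> (x - y) = shift \<mu> x - shift \<mu> y"
  and shift_scaleR: "shift \<mu> (a *\<^sub>R x) = a *\<^sub>R shift \<mu> x"
  by (simp_all add: shift_def algebra_simps)

lemma shift_minus: "shift \<mu> (- x) = - shift \<mu> x"
  using shift_scaleR[of \<mu> "-1" x] by simp

lemma linear_shift: "linear (shift \<mu>)"
  by (simp add: linearI shift_add shift_scaleR)

lemma shift_S: "x \<in> S \<Longrightarrow> shift \<mu> x \<in> S"
  by (simp add: shift_def M_S subspace_S subspace_diff subspace_scale)

lemma inner_shift_change: "y \<bullet> shift \<mu>' y = y \<bullet> shift \<mu> y + (\<mu> - \<mu>') * (y \<bullet> y)"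
  by (simp add: shift_def inner_diff_right algebra_simps)

lemma norm_eq_\<gamma>_iff: "norm x = \<gamma> \<longleftrightarrow> x \<bullet> x = \<gamma>\<^sup>2"
  using \<gamma>_pos by (metis norm_ge_zero power2_eq_imp_eq power2_norm_eq_inner less_imp_le)

lemma shift_pd_imp_psd: "shift_pd \<mu> \<Longrightarrow> shift_psd \<mu>"
  unfolding shift_pd_def shift_psd_def by (metis inner_zero_left less_imp_le order_refl)

lemma objective_difference:
  assumes "shift \<mu> u = - c" and "norm w = norm u"
  shows "objective w - objective u = (w - u) \<bullet> shift \<mu> (w - u)"
proof -
  have c_eq: "c = \<mu> *\<^sub>R u - M *v u"
    using assms(1) by (simp add: shift_def algebra_simps)
  have "w \<bullet> w = u \<bullet> u"
    using assms(2) by (simp add: dot_square_norm)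
  then show ?thesis
    unfolding objective_def shift_def
    by (simp add: c_eq inner_diff_left inner_diff_right inner_M_commute[of u w]
        inner_commute[of u w] inner_commute[of "M *v u"] algebra_simps)
qed

lemma exists_objective_minimizer:
  "\<exists>u\<in>feasible_sphere. \<forall>w\<in>feasible_sphere. objective u \<le> objective w"
proof (rule continuous_attains_inf)
  have "feasible_sphere = S \<inter> sphere 0 \<gamma>"
    unfolding feasible_sphere_def by auto
  then show "compact feasible_sphere"
    using closed_subspace[OF subspace_S] by (simp add: closed_Int_compact)
  have "(\<gamma> / norm c) *\<^sub>R c \<in> feasible_sphere"
    unfolding feasible_sphere_def using c_S c_nonzero \<gamma>_pos subspace_S by (simp add: subspace_scale)
  then show "feasible_sphere \<noteq> {}" by blast
  show "continuous_on feasible_sphere objective"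
    unfolding objective_def by (intro continuous_intros)
qed

lemma minimizer_gradient_orthogonal:
  assumes u: "u \<in> feasible_sphere" and min: "\<forall>w\<in>feasible_sphere. objective u \<le> objective w"
    and zS: "z \<in> S" and zu: "z \<bullet> u = 0" and zz: "z \<bullet> z = \<gamma>\<^sup>2"
  shows "z \<bullet> (M *v u + c) = 0"
proof -
  have uS: "u \<in> S" and uu: "u \<bullet> u = \<gamma>\<^sup>2"
    using u norm_eq_\<gamma>_iff unfolding feasible_sphere_def by auto
  text \<open>On the great circle through \<open>u\<close> in direction \<open>z\<close> the objective is least at \<open>t = 0\<close>.\<close>
  define \<psi> where "\<psi> t = objective (cos t *\<^sub>R u + sin t *\<^sub>R z)" for t
  have on_sphere: "cos t *\<^sub>R u + sin t *\<^sub>R z \<in> feasible_sphere" for t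
  proof -
    have "(cos t *\<^sub>R u + sin t *\<^sub>R z) \<bullet> (cos t *\<^sub>R u + sin t *\<^sub>R z)
        = (cos t)\<^sup>2 * (u \<bullet> u) + (sin t)\<^sup>2 * (z \<bullet> z)"
      using zu by (simp add: inner_add_left inner_add_right inner_commute[of u z] power2_eq_square)
    also have "\<dots> = ((cos t)\<^sup>2 + (sin t)\<^sup>2) * \<gamma>\<^sup>2"
      by (simp only: uu zz distrib_right)
    also have "\<dots> = \<gamma>\<^sup>2" by simp
    finally show ?thesis
      unfolding feasible_sphere_def norm_eq_\<gamma>_iff
      using uS zS by (simp add: subspace_S subspace_add subspace_scale)
  qed
  have \<psi>_eq: "\<psi> t = (cos t)\<^sup>2 * (u \<bullet> (M *v u)) + 2 * cos t * sin t * (z \<bullet> (M *v u))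
      + (sin t)\<^sup>2 * (z \<bullet> (M *v z)) + 2 * cos t * (c \<bullet> u) + 2 * sin t * (c \<bullet> z)" for t
    by (simp add: \<psi>_def objective_def inner_add_left inner_add_right matrix_vector_right_distrib
        matrix_vector_mult_scaleR inner_M_commute[of u z] power2_eq_square algebra_simps)
  have "(\<psi> has_real_derivative 2 * (z \<bullet> (M *v u + c))) (at 0)"
    unfolding \<psi>_eq[abs_def]
    by (auto intro!: derivative_eq_intros simp: inner_add_right inner_commute)
  moreover have "\<forall>t. \<bar>0 - t\<bar> < 1 \<longrightarrow> \<psi> 0 \<le> \<psi> t"
    using min on_sphere by (simp add: \<psi>_def)
  ultimately have "2 * (z \<bullet> (M *v u + c)) = 0"
    using DERIV_local_min zero_less_one by blast
  then show ?thesis by simp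
qed

lemma minimizer_first_order:
  assumes u: "u \<in> feasible_sphere" and min: "\<forall>w\<in>feasible_sphere. objective u \<le> objective w"
  obtains \<mu> where "shift \<mu> u = - c"
proof -
  have uS: "u \<in> S" and uu: "u \<bullet> u = \<gamma>\<^sup>2"
    using u norm_eq_\<gamma>_iff unfolding feasible_sphere_def by auto
  define g where "g = M *v u + c"
  define \<mu> where "\<mu> = (g \<bullet> u) / \<gamma>\<^sup>2"
  define h where "h = g - \<mu> *\<^sub>R u"
  have "h = 0"
  proof (rule ccontr)
    assume "h \<noteq> 0"
    have hu: "h \<bullet> u = 0"
      unfolding h_def \<mu>_def using uu \<gamma>_pos by (simp add: inner_diff_left)
    define z where "z = (\<gamma> / norm h) *\<^sub>R h"
    have "z \<in> S"
      unfolding z_def h_def g_def using uS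
      by (simp add: M_S c_S subspace_S subspace_add subspace_diff subspace_scale)
    moreover have "z \<bullet> u = 0" and "z \<bullet> z = \<gamma>\<^sup>2"
      unfolding z_def using hu \<open>h \<noteq> 0\<close> by (simp_all add: power_divide flip: power2_norm_eq_inner)
    ultimately have "z \<bullet> g = 0"
      unfolding g_def by (rule minimizer_gradient_orthogonal[OF u min])
    moreover have "h \<bullet> g = h \<bullet> h"
      using hu by (simp add: h_def inner_diff_right inner_diff_left inner_commute)
    ultimately show False
      unfolding z_def using \<open>h \<noteq> 0\<close> \<gamma>_pos by simp
  qed
  then show ?thesis
    using that[of \<mu>] unfolding h_def g_def shift_def by (simp add: algebra_simps)
qed

lemma minimizer_shift_nonneg:
  assumes u: "u \<in> feasible_sphere" and min: "\<forall>w\<in>feasible_sphere. objective u \<le> objective w"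
    and lagrange: "shift \<mu> u = - c" and yS: "y \<in> S" and yu: "y \<bullet> u \<noteq> 0"
  shows "0 \<le> y \<bullet> shift \<mu> y"
proof -
  have uS: "u \<in> S" and uu: "u \<bullet> u = \<gamma>\<^sup>2"
    using u norm_eq_\<gamma>_iff unfolding feasible_sphere_def by auto
  text \<open>The reflection \<open>w\<close> of \<open>u\<close> in the hyperplane orthogonal to \<open>y\<close> stays on the sphere.\<close>
  define s where "s = - 2 * (u \<bullet> y) / (y \<bullet> y)"
  have "y \<noteq> 0" using yu by auto
  then have "s \<noteq> 0" and sy: "s * (y \<bullet> y) = - 2 * (u \<bullet> y)"
    unfolding s_def using yu by (simp_all add: inner_commute)
  define w where "w = u + s *\<^sub>R y"
  have "w \<bullet> w = u \<bullet> u + s * (2 * (u \<bullet> y) + s * (y \<bullet> y))"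
    unfolding w_def by (simp add: inner_add_left inner_add_right inner_commute[of y u] algebra_simps)
  then have ww: "w \<bullet> w = u \<bullet> u"
    by (simp add: sy)
  then have "w \<in> feasible_sphere"
    using uS yS uu unfolding feasible_sphere_def norm_eq_\<gamma>_iff w_def
    by (simp add: subspace_S subspace_add subspace_scale)
  then have "0 \<le> objective w - objective u" using min by auto
  also have "\<dots> = s\<^sup>2 * (y \<bullet> shift \<mu> y)"
    using objective_difference[OF lagrange, of w] ww
    by (simp add: w_def shift_scaleR norm_eq_sqrt_inner power2_eq_square)
  finally show ?thesis
    using \<open>s \<noteq> 0\<close> by (simp add: zero_le_mult_iff)
qed

lemma minimizer_second_order:
  assumes u: "u \<in> feasible_sphere" and min: "\<forall>w\<in>feasible_sphere. objective u \<le> objective w"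
    and lagrange: "shift \<mu> u = - c"
  shows "shift_psd \<mu>"
  unfolding shift_psd_def
proof
  fix y assume yS: "y \<in> S"
  have uS: "u \<in> S" and uu: "u \<bullet> u = \<gamma>\<^sup>2"
    using u norm_eq_\<gamma>_iff unfolding feasible_sphere_def by auto
  show "0 \<le> y \<bullet> shift \<mu> y"
  proof (cases "y \<bullet> u = 0")
    case False
    then show ?thesis using minimizer_shift_nonneg[OF u min lagrange yS] by blast
  next
    case True
    define F where "F \<epsilon> = (y + \<epsilon> *\<^sub>R u) \<bullet> shift \<mu> (y + \<epsilon> *\<^sub>R u)" for \<epsilon>
    have F_eq: "F = (\<lambda>\<epsilon>. y \<bullet> shift \<mu> y + 2 * \<epsilon> * (u \<bullet> shift \<mu> y) + \<epsilon>\<^sup>2 * (u \<bullet> shift \<mu> u))"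
      by (simp add: fun_eq_iff F_def shift_add shift_scaleR inner_add_left inner_add_right
          inner_shift_commute[of y \<mu> u] power2_eq_square algebra_simps)
    have "0 \<le> F \<epsilon>" if "\<epsilon> \<noteq> 0" for \<epsilon>
    proof -
      have "(y + \<epsilon> *\<^sub>R u) \<bullet> u \<noteq> 0"
        using True uu \<gamma>_pos that by (simp add: inner_add_left)
      then show ?thesis
        unfolding F_def using minimizer_shift_nonneg[OF u min lagrange] yS uS
        by (simp add: subspace_S subspace_add subspace_scale)
    qed
    then have "\<forall>\<^sub>F \<epsilon> in at 0. 0 \<le> F \<epsilon>"
      by (auto simp: eventually_at_filter)
    moreover have "(F \<longlongrightarrow> F 0) (at 0)"
      unfolding F_eq by (intro tendsto_intros)
    ultimately have "0 \<le> F 0"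
      by (intro tendsto_lowerbound) auto
    then show ?thesis by (simp add: F_def)
  qed
qed

lemma lg_solution_exists:
  obtains \<mu> u where "lg_feasible \<mu> u" and "shift_psd \<mu>"
proof -
  obtain u where u: "u \<in> feasible_sphere"
    and min: "\<forall>w\<in>feasible_sphere. objective u \<le> objective w"
    using exists_objective_minimizer by blast
  obtain \<mu> where "shift \<mu> u = - c"
    using minimizer_first_order[OF u min] .
  then show ?thesis
    using that minimizer_second_order[OF u min] u
    unfolding feasible_sphere_def lg_feasible_def by blast
qed

lemma lg_feasible_value_le:
  assumes psd: "shift_psd \<mu>" and lg: "lg_feasible \<mu> u" and lg': "lg_feasible \<mu>' u'"
  shows "\<mu> \<le> \<mu>'"
proof (rule ccontr)
  assume "\<not> \<mu> \<le> \<mu>'"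
  have uS: "u \<in> S" and lag: "shift \<mu> u = - c" and nu: "norm u = \<gamma>"
    using lg unfolding lg_feasible_def by auto
  have u'S: "u' \<in> S" and lag': "shift \<mu>' u' = - c" and nu': "norm u' = \<gamma>"
    using lg' unfolding lg_feasible_def by auto
  define d where "d = u' - u"
  text \<open>Expand the objective around \<open>u\<close> and around \<open>u'\<close>, and add.\<close>
  have "objective u' - objective u = d \<bullet> shift \<mu> d"
    using objective_difference[OF lag] nu nu' by (simp add: d_def)
  moreover have "objective u - objective u' = d \<bullet> shift \<mu>' d"
    using objective_difference[OF lag', of u] nu nu'
    by (simp add: d_def shift_diff inner_diff_left inner_diff_right)
  ultimately have "2 * (d \<bullet> shift \<mu> d) + (\<mu> - \<mu>') * (d \<bullet> d) = 0"
    using inner_shift_change[of d \<mu>' \<mu>] by simp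
  moreover have "0 \<le> d \<bullet> shift \<mu> d"
    using psd uS u'S unfolding shift_psd_def d_def by (simp add: subspace_S subspace_diff)
  ultimately have "d = 0"
    using \<open>\<not> \<mu> \<le> \<mu>'\<close> by (smt (verit) inner_ge_zero inner_eq_zero_iff mult_pos_pos)
  then show False
    using lag lag' \<open>\<not> \<mu> \<le> \<mu>'\<close> nu \<gamma>_pos by (auto simp: d_def shift_def algebra_simps)
qed

lemma shift_psd_kernel:
  assumes psd: "shift_psd \<mu>" and yS: "y \<in> S" and zero: "y \<bullet> shift \<mu> y = 0"
  shows "shift \<mu> y = 0"
proof -
  define w where "w = shift \<mu> y"
  have "0 \<le> t * (2 * (w \<bullet> w)) + t\<^sup>2 * (w \<bullet> shift \<mu> w)" for t
  proof -
    have "0 \<le> (y + t *\<^sub>R w) \<bullet> shift \<mu> (y + t *\<^sub>R w)"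
      using psd yS shift_S unfolding shift_psd_def w_def
      by (simp add: subspace_S subspace_add subspace_scale)
    also have "\<dots> = t * (2 * (w \<bullet> w)) + t\<^sup>2 * (w \<bullet> shift \<mu> w)"
      using zero by (simp add: w_def shift_add shift_scaleR inner_add_left inner_add_right
          inner_shift_commute[of y \<mu> "shift \<mu> y"] power2_eq_square algebra_simps)
    finally show ?thesis .
  qed
  then have "2 * (w \<bullet> w) = 0"
    by (rule nonneg_quadratic_linear_coeff_zero)
  then show ?thesis by (simp add: w_def)
qed

lemma qep_feasible_imp_lg_feasible:
  assumes qep: "qep_feasible \<mu> z" and cz: "c \<bullet> z \<noteq> 0"
  shows "lg_feasible \<mu> ((- (\<gamma>\<^sup>2 / (c \<bullet> z))) *\<^sub>R shift \<mu> z)"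
proof -
  define v where "v = shift \<mu> z"
  have zS: "z \<in> S" and shift_v: "shift \<mu> v = ((c \<bullet> z) / \<gamma>\<^sup>2) *\<^sub>R c"
    using qep unfolding qep_feasible_def v_def by auto
  have "v \<bullet> v = z \<bullet> shift \<mu> v"
    by (simp add: v_def inner_shift_commute[of z \<mu> "shift \<mu> z"])
  also have "\<dots> = (c \<bullet> z)\<^sup>2 / \<gamma>\<^sup>2"
    by (simp add: shift_v inner_commute power2_eq_square)
  finally have "((- (\<gamma>\<^sup>2 / (c \<bullet> z))) *\<^sub>R v) \<bullet> ((- (\<gamma>\<^sup>2 / (c \<bullet> z))) *\<^sub>R v) = \<gamma>\<^sup>2"
    using cz \<gamma>_pos by (simp add: field_simps power2_eq_square)
  moreover have "shift \<mu> ((- (\<gamma>\<^sup>2 / (c \<bullet> z))) *\<^sub>R v) = - c"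
    using cz \<gamma>_pos by (simp add: shift_minus shift_scaleR shift_v)
  ultimately show ?thesis
    unfolding lg_feasible_def norm_eq_\<gamma>_iff v_def
    using zS by (simp add: shift_S subspace_S subspace_scale subspace_neg)
qed

lemma qep_feasible_value_le:
  assumes psd: "shift_psd \<mu>" and lg: "lg_feasible \<mu> u" and qep: "qep_feasible \<mu>' z"
  shows "\<mu> \<le> \<mu>'"
proof (rule ccontr)
  assume "\<not> \<mu> \<le> \<mu>'"
  have zS: "z \<in> S" and "z \<noteq> 0"
    using qep unfolding qep_feasible_def by auto
  show False
  proof (cases "c \<bullet> z = 0")
    case True
    then have "shift \<mu>' (shift \<mu>' z) = 0"
      using qep unfolding qep_feasible_def by simp
    then have "shift \<mu>' z \<bullet> shift \<mu>' z = 0"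
      by (simp add: inner_shift_commute[of "shift \<mu>' z" \<mu>' z])
    then have "z \<bullet> shift \<mu>' z = 0" by simp
    moreover have "0 \<le> z \<bullet> shift \<mu> z"
      using psd zS unfolding shift_psd_def by blast
    ultimately show False
      using inner_shift_change[of z \<mu>' \<mu>] \<open>\<not> \<mu> \<le> \<mu>'\<close> \<open>z \<noteq> 0\<close>
      by (smt (verit) inner_gt_zero_iff mult_pos_pos)
  next
    case False
    then show False
      using lg_feasible_value_le[OF psd lg qep_feasible_imp_lg_feasible[OF qep]] \<open>\<not> \<mu> \<le> \<mu>'\<close>
      by blast
  qed
qed

lemma shift_pd_if_not_hard_case:
  assumes easy: "\<not> hard_case" and lg: "lg_feasible \<mu> u" and psd: "shift_psd \<mu>"
  shows "shift_pd \<mu>"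
  unfolding shift_pd_def
proof (intro ballI impI)
  fix y assume yS: "y \<in> S" and "y \<noteq> 0"
  show "0 < y \<bullet> shift \<mu> y"
  proof (rule ccontr)
    assume "\<not> 0 < y \<bullet> shift \<mu> y"
    then have "y \<bullet> shift \<mu> y = 0"
      using psd yS unfolding shift_psd_def by force
    then have eigen: "shift \<mu> y = 0"
      by (rule shift_psd_kernel[OF psd yS])
    have "c \<bullet> y = - (y \<bullet> shift \<mu> u)"
      using lg unfolding lg_feasible_def by (simp add: inner_commute)
    also have "\<dots> = 0"
      by (simp add: inner_shift_commute[of y \<mu> u] eigen)
    finally have "c \<bullet> y = 0" .
    then have "qep_feasible \<mu> y"
      unfolding qep_feasible_def using yS \<open>y \<noteq> 0\<close> eigen by (simp add: shift_def)
    then have hard_case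
      unfolding hard_case_def using qep_feasible_value_le[OF psd lg] \<open>c \<bullet> y = 0\<close> by blast
    then show False using easy by simp
  qed
qed

lemma inj_on_shift:
  assumes "shift_pd \<mu>"
  shows "inj_on (shift \<mu>) S"
proof (rule inj_onI)
  fix x y assume "x \<in> S" "y \<in> S" "shift \<mu> x = shift \<mu> y"
  then have "x - y \<in> S" and "(x - y) \<bullet> shift \<mu> (x - y) = 0"
    by (simp_all add: subspace_S subspace_diff shift_diff)
  then show "x = y"
    using assms unfolding shift_pd_def by force
qed

lemma objective_increment_lg_feasible:
  assumes "lg_feasible \<mu> u" and "w \<in> feasible_sphere"
  shows "w - u \<in> S" and "objective w - objective u = (w - u) \<bullet> shift \<mu> (w - u)"
  using assms objective_difference[of \<mu> u w] subspace_diff[OF subspace_S]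
  unfolding lg_feasible_def feasible_sphere_def by auto

lemma lg_feasible_minimizes_objective:
  assumes "shift_psd \<mu>" and "lg_feasible \<mu> u" and "w \<in> feasible_sphere"
  shows "objective u \<le> objective w"
  using assms(1) objective_increment_lg_feasible[OF assms(2,3)] unfolding shift_psd_def by force

lemma lg_feasible_unique_minimizer:
  assumes "shift_pd \<mu>" and "lg_feasible \<mu> u" and "w \<in> feasible_sphere"
    and "objective w \<le> objective u"
  shows "w = u"
  using assms(1,4) objective_increment_lg_feasible[OF assms(2,3)] unfolding shift_pd_def by force

lemma lg_feasible_in_invariant_subspace:
  assumes pd: "shift_pd \<mu>" and lg: "lg_feasible \<mu> u"
    and K: "subspace K" "K \<subseteq> S" "\<And>x. x \<in> K \<Longrightarrow> M *v x \<in> K" and cK: "c \<in> K"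
  shows "u \<in> K"
proof -
  have "shift \<mu> ` K \<subseteq> K"
    using K by (auto simp: shift_def subspace_diff subspace_scale)
  moreover have "inj_on (shift \<mu>) K"
    using inj_on_subset[OF inj_on_shift[OF pd] K(2)] .
  ultimately have "shift \<mu> ` K = K"
    using linear_inj_on_subspace_surj[OF linear_shift K(1)] by blast
  then obtain w where "w \<in> K" and "shift \<mu> w = - c"
    using cK K(1) by (metis imageE subspace_neg)
  moreover have "u \<in> S" and "shift \<mu> u = - c"
    using lg unfolding lg_feasible_def by auto
  ultimately have "w = u"
    using inj_on_shift[OF pd] K(2) by (metis inj_onD subsetD)
  then show ?thesis using \<open>w \<in> K\<close> by simp
qed

end

section \<open>The Lanczos process\<close>

lemma Tk_sum_Qmul: "(\<Sum>j\<in>{1..k}. Tk M r i j * x j) = lz_q M r i \<bullet> (M *v Qmul M r k x)"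
  by (simp add: Tk_def Qmul_def linear_sum[OF matrix_vector_mul_linear] matrix_vector_mult_scaleR
      inner_sum_right mult.commute)

locale lanczos_process =
  fixes M :: "real^'n^'n" and r :: "real^'n"
  assumes symmetric_M: "transpose M = M" and r_nonzero: "r \<noteq> 0"
begin

abbreviation q :: "nat \<Rightarrow> real^'n" where "q \<equiv> lz_q M r"
abbreviation \<beta> :: "nat \<Rightarrow> real" where "\<beta> \<equiv> lz_beta M r"
abbreviation krylov :: "(real^'n) set" where "krylov \<equiv> span (q ` {1..kmax M r})"

definition \<alpha> :: "nat \<Rightarrow> real" where
  "\<alpha> j = q j \<bullet> (M *v q j)"

lemma lz_q_0 [simp]: "q 0 = 0"
  by (simp add: lz_q_def)

(* Stated with Suc 0 because the simplifier rewrites the argument 1 of q and \<beta> to Suc 0. *)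
lemma lz_q_1: "q (Suc 0) = (1 / norm r) *\<^sub>R r"
  by (simp add: lz_q_def Let_def)

lemma lz_beta_1 [simp]: "\<beta> (Suc 0) = norm r"
  by (simp add: lz_beta_def)

lemma lz_step:
  fixes j :: nat
  defines "qh \<equiv> M *v q (Suc j) - \<alpha> (Suc j) *\<^sub>R q (Suc j) - \<beta> (Suc j) *\<^sub>R q j"
  shows "\<beta> (Suc (Suc j)) = norm qh" and "q (Suc (Suc j)) = (1 / norm qh) *\<^sub>R qh"
proof -
  obtain qp q' b where L: "lanczos M r j = (qp, q', b)"
    by (cases "lanczos M r j") auto
  then have "q j = qp" "q (Suc j) = q'" "\<beta> (Suc j) = b"
    by (simp_all add: lz_q_def lz_beta_def Let_def)
  then show "\<beta> (Suc (Suc j)) = norm qh" "q (Suc (Suc j)) = (1 / norm qh) *\<^sub>R qh"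
    using L unfolding qh_def by (simp_all add: lz_q_def lz_beta_def \<alpha>_def Let_def)
qed

lemma lz_three_term:
  "M *v q (Suc j) = \<beta> (Suc (Suc j)) *\<^sub>R q (Suc (Suc j)) + \<alpha> (Suc j) *\<^sub>R q (Suc j) + \<beta> (Suc j) *\<^sub>R q j"
proof -
  define qh where "qh = M *v q (Suc j) - \<alpha> (Suc j) *\<^sub>R q (Suc j) - \<beta> (Suc j) *\<^sub>R q j"
  have "\<beta> (Suc (Suc j)) *\<^sub>R q (Suc (Suc j)) = qh"
    using lz_step[of j] unfolding qh_def[symmetric] by (cases "qh = 0") auto
  then show ?thesis
    unfolding qh_def by (simp add: algebra_simps)
qed

lemma lz_q_in_invariant_subspace:
  assumes "subspace V" and "r \<in> V" and "\<And>x. x \<in> V \<Longrightarrow> M *v x \<in> V"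
  shows "q j \<in> V"
proof -
  have "q j \<in> V \<and> q (Suc j) \<in> V"
  proof (induction j)
    case 0
    show ?case using assms by (simp add: lz_q_1 subspace_0 subspace_scale)
  next
    case (Suc j)
    then show ?case
      using lz_step(2)[of j] assms by (simp add: subspace_diff subspace_scale)
  qed
  then show ?thesis ..
qed

definition orthonormal_upto :: "nat \<Rightarrow> bool" where
  "orthonormal_upto k \<longleftrightarrow> (\<forall>i\<le>k. \<forall>l\<le>k. q i \<bullet> q l = (if i = l \<and> i \<noteq> 0 then 1 else 0))"

lemma orthonormal_uptoD:
  "orthonormal_upto k \<Longrightarrow> i \<le> k \<Longrightarrow> l \<le> k \<Longrightarrow> q i \<bullet> q l = (if i = l \<and> i \<noteq> 0 then 1 else 0)"
  unfolding orthonormal_upto_def by blast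

lemma inner_q_M_q:
  assumes ON: "orthonormal_upto (Suc p)" and "i \<le> p"
  shows "q i \<bullet> (M *v q (Suc p)) = (if i = p \<and> i \<noteq> 0 then \<beta> (Suc p) else 0)"
proof (cases i)
  case 0
  then show ?thesis by simp
next
  case (Suc i')
  have "q i \<bullet> (M *v q (Suc p)) = (M *v q i) \<bullet> q (Suc p)"
    using symmetric_matrix_inner[OF symmetric_M] by simp
  also have "\<dots> = \<beta> (Suc i) * (q (Suc i) \<bullet> q (Suc p)) + \<alpha> i * (q i \<bullet> q (Suc p))
      + \<beta> i * (q i' \<bullet> q (Suc p))"
    using lz_three_term[of i'] Suc by (simp add: inner_add_left)
  also have "\<dots> = (if i = p \<and> i \<noteq> 0 then \<beta> (Suc p) else 0)"
    using orthonormal_uptoD[OF ON] \<open>i \<le> p\<close> Suc by auto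
  finally show ?thesis .
qed

text \<open>The classical Lanczos argument: by the three-term recurrence and the symmetry of \<open>M\<close>,
  a new vector is orthogonal to all earlier ones, not only to the last two.\<close>

lemma lz_q_orthogonal_next:
  assumes ON: "orthonormal_upto (Suc p)" and nz: "\<beta> (Suc (Suc p)) \<noteq> 0" and "i \<le> Suc p"
  shows "q (Suc (Suc p)) \<bullet> q i = 0"
proof -
  have "\<beta> (Suc (Suc p)) * (q (Suc (Suc p)) \<bullet> q i)
      = q i \<bullet> (M *v q (Suc p)) - \<alpha> (Suc p) * (q i \<bullet> q (Suc p)) - \<beta> (Suc p) * (q i \<bullet> q p)"
    unfolding lz_three_term[of p]
    by (simp add: inner_add_right inner_commute[of "q (Suc (Suc p))"])
  also have "\<dots> = 0"
  proof (cases "i = Suc p")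
    case True
    then show ?thesis
      using orthonormal_uptoD[OF ON] by (simp add: \<alpha>_def inner_commute)
  next
    case False
    then have "i \<le> p" using \<open>i \<le> Suc p\<close> by simp
    then show ?thesis
      using inner_q_M_q[OF ON] orthonormal_uptoD[OF ON] by auto
  qed
  finally show ?thesis
    using nz by simp
qed

lemma orthonormal_upto_Suc:
  assumes ON: "orthonormal_upto j" and nz: "\<beta> (Suc j) \<noteq> 0"
  shows "orthonormal_upto (Suc j)"
proof (cases j)
  case 0
  have "q 1 \<bullet> q 1 = 1"
    using r_nonzero by (simp add: lz_q_1 dot_square_norm power2_eq_square)
  then show ?thesis
    using 0 unfolding orthonormal_upto_def by (auto simp: le_Suc_eq)
next
  case (Suc p)
  have orth: "q (Suc (Suc p)) \<bullet> q i = 0" if "i \<le> Suc p" for i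
    using lz_q_orthogonal_next[OF _ _ that] ON nz Suc by simp
  have unit: "q (Suc (Suc p)) \<bullet> q (Suc (Suc p)) = 1"
    using lz_step[of p] nz Suc by (simp add: power2_eq_square flip: power2_norm_eq_inner)
  show ?thesis
    unfolding orthonormal_upto_def Suc
  proof (intro allI impI)
    fix i l assume "i \<le> Suc (Suc p)" "l \<le> Suc (Suc p)"
    then consider "i \<le> Suc p" "l \<le> Suc p" | "i = Suc (Suc p)" "l \<le> Suc p"
      | "i \<le> Suc p" "l = Suc (Suc p)" | "i = Suc (Suc p)" "l = Suc (Suc p)"
      by linarith
    then show "q i \<bullet> q l = (if i = l \<and> i \<noteq> 0 then 1 else 0)"
    proof cases
      case 1
      then show ?thesis using orthonormal_uptoD[OF ON] Suc by simp
    next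
      case 2
      then show ?thesis using orth[of l] by simp
    next
      case 3
      then show ?thesis using orth[of i] by (simp add: inner_commute)
    next
      case 4
      then show ?thesis using unit by simp
    qed
  qed
qed

lemma orthonormal_upto_if_beta_nonzero:
  assumes "\<And>i. i \<in> {1..k} \<Longrightarrow> \<beta> i \<noteq> 0"
  shows "orthonormal_upto k"
  using assms
proof (induction k)
  case 0
  then show ?case by (simp add: orthonormal_upto_def)
next
  case (Suc k)
  then show ?case using orthonormal_upto_Suc by simp
qed

lemma orthonormal_upto_le_dim:
  assumes ON: "orthonormal_upto N"
  shows "N \<le> CARD('n)"
proof -
  have q_ON: "q i \<bullet> q l = (if i = l then 1 else 0)" if "i \<in> {1..N}" "l \<in> {1..N}" for i l
    using orthonormal_uptoD[OF ON] that by auto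
  have "inj_on q {1..N}"
  proof (rule inj_onI)
    fix i l assume i: "i \<in> {1..N}" and l: "l \<in> {1..N}" and "q i = q l"
    then have "q i \<bullet> q l = 1"
      using q_ON[OF i i] by simp
    then show "i = l"
      using q_ON[OF i l] by (simp split: if_splits)
  qed
  moreover have "independent (q ` {1..N})"
  proof (rule pairwise_orthogonal_independent)
    show "pairwise orthogonal (q ` {1..N})"
      unfolding pairwise_def orthogonal_def using q_ON by auto
    show "0 \<notin> q ` {1..N}"
      using q_ON by fastforce
  qed
  ultimately show ?thesis
    using independent_bound[of "q ` {1..N}"] by (simp add: card_image)
qed

lemma lz_beta_vanishes: "\<exists>k\<ge>1. \<beta> (k + 1) = 0"
proof (rule ccontr)
  assume none: "\<not> ?thesis"
  have "\<beta> i \<noteq> 0" if "1 \<le> i" for i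
  proof (cases "i = 1")
    case True
    then show ?thesis using r_nonzero by simp
  next
    case False
    then have "1 \<le> i - 1" and "i - 1 + 1 = i"
      using that by auto
    then show ?thesis
      using none by metis
  qed
  then have "orthonormal_upto (Suc CARD('n))"
    using orthonormal_upto_if_beta_nonzero by auto
  then show False
    using orthonormal_upto_le_dim by fastforce
qed

lemma kmax_pos: "1 \<le> kmax M r"
  and lz_beta_kmax: "\<beta> (kmax M r + 1) = 0"
  using LeastI_ex[OF lz_beta_vanishes[unfolded Bex_def]] unfolding kmax_def by auto

lemma lz_beta_nonzero_below_kmax:
  assumes "i \<in> {1..kmax M r}"
  shows "\<beta> i \<noteq> 0"
proof (cases "i = 1")
  case True
  then show ?thesis using r_nonzero by simp
next
  case False
  then have "1 \<le> i - 1" and "i - 1 < kmax M r"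
    using assms by auto
  then have "\<beta> (i - 1 + 1) \<noteq> 0"
    using not_less_Least[of "i - 1" "\<lambda>k. 1 \<le> k \<and> \<beta> (k + 1) = 0"] unfolding kmax_def by blast
  then show ?thesis
    using False assms by simp
qed

lemma q_orthonormal:
  assumes "i \<in> {1..kmax M r}" and "l \<in> {1..kmax M r}"
  shows "q i \<bullet> q l = (if i = l then 1 else 0)"
  using orthonormal_upto_if_beta_nonzero[of "kmax M r"] lz_beta_nonzero_below_kmax assms
    orthonormal_uptoD
  by auto

lemma inner_q_Qmul:
  assumes "i \<in> {1..kmax M r}"
  shows "q i \<bullet> Qmul M r (kmax M r) x = x i"
proof -
  have "q i \<bullet> Qmul M r (kmax M r) x = (\<Sum>j\<in>{1..kmax M r}. if j = i then x j else 0)"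
    unfolding Qmul_def inner_sum_right by (intro sum.cong) (use assms q_orthonormal in auto)
  then show ?thesis
    using assms by simp
qed

lemma norm_Qmul: "norm (Qmul M r (kmax M r) x) = sqrt (\<Sum>j\<in>{1..kmax M r}. (x j)\<^sup>2)"
proof -
  have "Qmul M r (kmax M r) x \<bullet> Qmul M r (kmax M r) x
      = (\<Sum>j\<in>{1..kmax M r}. x j * (q j \<bullet> Qmul M r (kmax M r) x))"
    by (subst (1) Qmul_def) (simp add: inner_sum_left)
  also have "\<dots> = (\<Sum>j\<in>{1..kmax M r}. (x j)\<^sup>2)"
    by (intro sum.cong) (simp_all add: inner_q_Qmul power2_eq_square)
  finally show ?thesis
    by (simp add: norm_eq_sqrt_inner)
qed

lemma q_in_krylov: "i \<le> kmax M r \<Longrightarrow> q i \<in> krylov"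
  by (cases "i = 0") (auto simp: span_zero intro: span_base)

lemma Qmul_in_krylov: "Qmul M r (kmax M r) x \<in> krylov"
  unfolding Qmul_def by (intro span_sum span_scale span_base) auto

lemma inner_q_r: "q i \<bullet> r = norm r * (q i \<bullet> q 1)"
  using r_nonzero by (simp add: lz_q_1)

lemma r_in_krylov: "r \<in> krylov"
proof -
  have "norm r *\<^sub>R q 1 \<in> krylov"
    using q_in_krylov[OF kmax_pos] by (rule span_scale)
  then show ?thesis
    using r_nonzero by (simp add: lz_q_1)
qed

lemma M_krylov:
  assumes "x \<in> krylov"
  shows "M *v x \<in> krylov"
proof -
  have "M *v q j \<in> krylov" if j: "j \<in> {1..kmax M r}" for j
  proof -
    obtain j' where j': "j = Suc j'"
      using j by (cases j) auto
    have "\<beta> (Suc j) *\<^sub>R q (Suc j) \<in> krylov"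
      using j lz_beta_kmax q_in_krylov[of "Suc j"]
      by (cases "j = kmax M r") (auto simp: span_zero intro: span_scale)
    then show ?thesis
      using j j' lz_three_term[of j'] q_in_krylov[of j] q_in_krylov[of j']
      by (auto intro!: span_add span_scale)
  qed
  then have "span ((*v) M ` q ` {1..kmax M r}) \<subseteq> krylov"
    by (intro span_minimal) auto
  then show ?thesis
    using assms by (auto simp: span_linear_image[OF matrix_vector_mul_linear])
qed

lemma krylov_subset_invariant_subspace:
  assumes "subspace V" and "r \<in> V" and "\<And>x. x \<in> V \<Longrightarrow> M *v x \<in> V"
  shows "krylov \<subseteq> V"
  using span_minimal lz_q_in_invariant_subspace[OF assms] assms(1) by blast

lemma krylov_eqI:
  assumes "v \<in> krylov" and "w \<in> krylov" and "\<And>i. i \<in> {1..kmax M r} \<Longrightarrow> q i \<bullet> v = q i \<bullet> w"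
  shows "v = w"
proof -
  have "orthogonal (v - w) (v - w)"
    by (rule orthogonal_to_span[of _ "q ` {1..kmax M r}"])
      (use assms in \<open>auto simp: span_diff orthogonal_def inner_diff_right inner_commute\<close>)
  then show ?thesis
    by (simp add: orthogonal_def)
qed

lemma Qmul_krylov_coordinates:
  assumes "v \<in> krylov"
  shows "Qmul M r (kmax M r) (\<lambda>j. if j \<in> {1..kmax M r} then q j \<bullet> v else 0) = v"
proof (rule krylov_eqI[OF Qmul_in_krylov assms])
  fix i assume "i \<in> {1..kmax M r}"
  then show "q i \<bullet> Qmul M r (kmax M r) (\<lambda>j. if j \<in> {1..kmax M r} then q j \<bullet> v else 0) = q i \<bullet> v"
    by (simp add: inner_q_Qmul)
qed

lemma rLG_feasible_kmax_iff:
  "rLG_feasible M r g (kmax M r) \<mu> x \<longleftrightarrow>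
     (\<forall>i. i \<notin> {1..kmax M r} \<longrightarrow> x i = 0) \<and>
     M *v Qmul M r (kmax M r) x - \<mu> *\<^sub>R Qmul M r (kmax M r) x = - r \<and>
     norm (Qmul M r (kmax M r) x) = g"
proof -
  let ?u = "Qmul M r (kmax M r) x"
  have lhs: "(\<Sum>j\<in>{1..kmax M r}. Tk M r i j * x j) - \<mu> * x i = q i \<bullet> (M *v ?u - \<mu> *\<^sub>R ?u)"
    if "i \<in> {1..kmax M r}" for i
    using inner_q_Qmul[OF that] unfolding Tk_sum_Qmul by (simp add: inner_diff_right)
  have rhs: "- (if i = 1 then norm r else 0) = q i \<bullet> (- r)" if "i \<in> {1..kmax M r}" for i
    using q_orthonormal[OF that, of 1] kmax_pos by (simp add: inner_q_r)
  have "(\<forall>i\<in>{1..kmax M r}. q i \<bullet> (M *v ?u - \<mu> *\<^sub>R ?u) = q i \<bullet> (- r))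
      \<longleftrightarrow> M *v ?u - \<mu> *\<^sub>R ?u = - r"
  proof -
    have "M *v ?u - \<mu> *\<^sub>R ?u \<in> krylov" and "- r \<in> krylov"
      using M_krylov[OF Qmul_in_krylov] Qmul_in_krylov r_in_krylov
      by (auto intro: span_diff span_scale span_neg)
    note eqI = krylov_eqI[OF this]
    show ?thesis
      by (auto intro: eqI)
  qed
  then show ?thesis
    unfolding rLG_feasible_def norm_Qmul using lhs rhs by auto
qed

end

section \<open>The constrained Rayleigh quotient problem\<close>

locale crq_problem = full_column_rank C for C :: "real^'m^'n" +
  fixes A :: "real^'n^'n" and b :: "real^'m"
  assumes symmetric_A: "transpose A = A"
    and n0_small: "norm (n0 C b) < 1"
    and b0_nonzero: "b0 A C b \<noteq> 0"
begin

lemma gam_pos: "0 < gam C b"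
  and gam_squared: "(gam C b)\<^sup>2 = 1 - (norm (n0 C b))\<^sup>2"
proof -
  have "(norm (n0 C b))\<^sup>2 < 1"
    using n0_small by (simp add: abs_square_less_1)
  then show "0 < gam C b" "(gam C b)\<^sup>2 = 1 - (norm (n0 C b))\<^sup>2"
    unfolding gam_def by simp_all
qed

sublocale qp: sphere_qp "Mmat A C" "b0 A C b" "{u. transpose C *v u = 0}" "gam C b"
  using transpose_Mmat[OF symmetric_A] subspace_kernel Mmat_in_kernel b0_in_kernel b0_nonzero gam_pos
  by unfold_locales auto

sublocale lz: lanczos_process "Mmat A C" "b0 A C b"
  using transpose_Mmat[OF symmetric_A] b0_nonzero by unfold_locales

lemma LG_feasible_iff: "LG_feasible A C b \<mu> u \<longleftrightarrow> qp.lg_feasible \<mu> u"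
  unfolding LG_feasible_def qp.lg_feasible_def qp.shift_def
  by (auto simp: matrix_minus_scaled_identity_apply)

lemma QEP_hard_case_iff: "QEP_hard_case A C b \<longleftrightarrow> qp.hard_case"
proof -
  have "QEP_feasible A C b \<mu> z \<longleftrightarrow> qp.qep_feasible \<mu> z" for \<mu> z
    unfolding QEP_feasible_def qp.qep_feasible_def qp.shift_def
    by (auto simp: matrix_minus_scaled_identity_apply simp flip: matrix_vector_mul_assoc)
  then show ?thesis
    unfolding QEP_hard_case_def qp.hard_case_def QEP_minimizer_def by simp
qed

lemma CRQ_feasible_iff: "CRQ_feasible C b v \<longleftrightarrow> v - n0 C b \<in> qp.feasible_sphere"
proof -
  define w where "w = v - n0 C b"
  have v: "v = w + n0 C b"
    by (simp add: w_def)
  have kernel: "transpose C *v v = b \<longleftrightarrow> transpose C *v w = 0"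
    using transpose_n0 by (simp add: v matrix_vector_right_distrib)
  have "v \<bullet> v = w \<bullet> w + n0 C b \<bullet> n0 C b" if "transpose C *v w = 0"
    using kernel_orthogonal_n0[OF that]
    by (simp add: v inner_add_left inner_add_right inner_commute[of "n0 C b" w])
  then show ?thesis
    unfolding CRQ_feasible_def qp.feasible_sphere_def qp.norm_eq_\<gamma>_iff gam_squared
      power2_norm_eq_inner w_def[symmetric] kernel
    by auto
qed

lemma CRQ_objective:
  assumes "transpose C *v v = b"
  shows "v \<bullet> (A *v v) = qp.objective (v - n0 C b) + n0 C b \<bullet> (A *v n0 C b)"
proof -
  define w where "w = v - n0 C b"
  have v: "v = w + n0 C b"
    by (simp add: w_def)
  have w: "transpose C *v w = 0"
    using assms transpose_n0 by (simp add: w_def matrix_vector_mult_diff_distrib)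
  have cross: "n0 C b \<bullet> (A *v w) = w \<bullet> (A *v n0 C b)"
    using symmetric_matrix_inner[OF symmetric_A, of "n0 C b" w] by (simp add: inner_commute)
  have "v \<bullet> (A *v v) = w \<bullet> (A *v w) + 2 * (w \<bullet> (A *v n0 C b)) + n0 C b \<bullet> (A *v n0 C b)"
    by (simp add: v matrix_vector_right_distrib inner_add_left inner_add_right cross)
  also have "\<dots> = qp.objective w + n0 C b \<bullet> (A *v n0 C b)"
    using inner_Mmat_kernel[OF w w] inner_b0_kernel[OF w]
    by (simp add: qp.objective_def inner_commute[of "b0 A C b"])
  finally show ?thesis
    by (simp add: w_def)
qed

lemma LG_solution_if_shift_psd:
  assumes "qp.lg_feasible \<mu> u" and "qp.shift_psd \<mu>"
  shows "LG_solution A C b \<mu> u"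
  using assms qp.lg_feasible_value_le unfolding LG_solution_def LG_feasible_iff by blast

lemma CRQ_minimizer_iff:
  assumes lg: "qp.lg_feasible \<mu> u" and pd: "qp.shift_pd \<mu>"
  shows "CRQ_minimizer A C b v \<longleftrightarrow> v = u + n0 C b"
proof -
  have "u \<in> qp.feasible_sphere"
    using lg unfolding qp.lg_feasible_def qp.feasible_sphere_def by auto
  then have feasible_u: "CRQ_feasible C b (u + n0 C b)"
    by (simp add: CRQ_feasible_iff)
  have objective: "v' \<bullet> (A *v v') = qp.objective (v' - n0 C b) + n0 C b \<bullet> (A *v n0 C b)"
    if "CRQ_feasible C b v'" for v'
    using that CRQ_objective unfolding CRQ_feasible_def by blast
  show ?thesis
  proof
    assume "CRQ_minimizer A C b v"
    then have "CRQ_feasible C b v" and "qp.objective (v - n0 C b) \<le> qp.objective u"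
      using feasible_u objective[OF feasible_u] objective[of v]
      unfolding CRQ_minimizer_def by auto
    then show "v = u + n0 C b"
      using qp.lg_feasible_unique_minimizer[OF pd lg] by (force simp: CRQ_feasible_iff)
  next
    assume "v = u + n0 C b"
    moreover have "qp.objective u \<le> qp.objective (v' - n0 C b)" if "CRQ_feasible C b v'" for v'
      using qp.lg_feasible_minimizes_objective[OF qp.shift_pd_imp_psd[OF pd] lg] that
      by (simp add: CRQ_feasible_iff)
    ultimately show "CRQ_minimizer A C b v"
      unfolding CRQ_minimizer_def using feasible_u objective by force
  qed
qed

lemma lg_feasible_Qmul_if_rLG_feasible:
  assumes "rLG_feasible (Mmat A C) (b0 A C b) (gam C b) (kmax (Mmat A C) (b0 A C b)) \<mu> x"
  shows "qp.lg_feasible \<mu> (Qmul (Mmat A C) (b0 A C b) (kmax (Mmat A C) (b0 A C b)) x)"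
proof -
  have "lz.krylov \<subseteq> {u. transpose C *v u = 0}"
    using lz.krylov_subset_invariant_subspace[OF subspace_kernel] b0_in_kernel Mmat_in_kernel
    by blast
  then show ?thesis
    using assms lz.Qmul_in_krylov
    unfolding lz.rLG_feasible_kmax_iff qp.lg_feasible_def qp.shift_def by auto
qed

lemma rLG_feasible_krylov_coordinates:
  assumes "qp.lg_feasible \<mu> u" and "u \<in> lz.krylov"
  defines "k \<equiv> kmax (Mmat A C) (b0 A C b)"
  shows "rLG_feasible (Mmat A C) (b0 A C b) (gam C b) k \<mu>
      (\<lambda>j. if j \<in> {1..k} then lz_q (Mmat A C) (b0 A C b) j \<bullet> u else 0)"
  using assms
  unfolding k_def lz.rLG_feasible_kmax_iff lz.Qmul_krylov_coordinates[OF assms(2)]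
    qp.lg_feasible_def qp.shift_def
  by auto

lemma lg_feasible_in_krylov:
  assumes "qp.lg_feasible \<mu> u" and "qp.shift_pd \<mu>"
  shows "u \<in> lz.krylov"
proof (rule qp.lg_feasible_in_invariant_subspace[OF assms(2,1) subspace_span])
  show "lz.krylov \<subseteq> {u. transpose C *v u = 0}"
    using lz.krylov_subset_invariant_subspace[OF subspace_kernel] b0_in_kernel Mmat_in_kernel
    by blast
qed (use lz.M_krylov lz.r_in_krylov in auto)

lemma rLG_minimizer_kmax:
  assumes lg: "qp.lg_feasible \<mu> u" and pd: "qp.shift_pd \<mu>"
  defines "k \<equiv> kmax (Mmat A C) (b0 A C b)"
  shows "rLG_minimizer (Mmat A C) (b0 A C b) (gam C b) k \<mu>
      (\<lambda>j. if j \<in> {1..k} then lz_q (Mmat A C) (b0 A C b) j \<bullet> u else 0)"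
    and "rLG_minimizer (Mmat A C) (b0 A C b) (gam C b) k \<mu>' x
      \<Longrightarrow> \<mu>' = \<mu> \<and> Qmul (Mmat A C) (b0 A C b) k x = u"
proof -
  have le: "\<mu> \<le> \<mu>'" if "rLG_feasible (Mmat A C) (b0 A C b) (gam C b) k \<mu>' x" for \<mu>' x
    using qp.lg_feasible_value_le[OF qp.shift_pd_imp_psd[OF pd] lg]
      lg_feasible_Qmul_if_rLG_feasible that
    unfolding k_def by blast
  show min: "rLG_minimizer (Mmat A C) (b0 A C b) (gam C b) k \<mu>
      (\<lambda>j. if j \<in> {1..k} then lz_q (Mmat A C) (b0 A C b) j \<bullet> u else 0)"
    unfolding rLG_minimizer_def k_def
    using rLG_feasible_krylov_coordinates[OF lg lg_feasible_in_krylov[OF lg pd]] le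
    unfolding k_def by blast
  show "\<mu>' = \<mu> \<and> Qmul (Mmat A C) (b0 A C b) k x = u"
    if "rLG_minimizer (Mmat A C) (b0 A C b) (gam C b) k \<mu>' x"
  proof
    show "\<mu>' = \<mu>"
      using that min le unfolding rLG_minimizer_def by (meson antisym)
    then have "qp.lg_feasible \<mu> (Qmul (Mmat A C) (b0 A C b) k x)"
      using that lg_feasible_Qmul_if_rLG_feasible unfolding rLG_minimizer_def k_def by blast
    then show "Qmul (Mmat A C) (b0 A C b) k x = u"
      using lg qp.inj_on_shift[OF pd] unfolding qp.lg_feasible_def inj_on_def by auto
  qed
qed

end

theorem corollary3p1:
  fixes A :: "real^'n^'n" and C :: "real^'m^'n" and b :: "real^'m"
  assumes symA: "transpose A = A"
    and mn: "CARD('m) < CARD('n)"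
    and rankC: "rank C = CARD('m)"
    and n0_small: "norm (n0 C b) < 1"
    and b0_nz: "b0 A C b \<noteq> 0"
    and easy: "QEP_easy_case A C b"
  shows "(\<exists>\<mu> x. rLG_minimizer (Mmat A C) (b0 A C b) (gam C b) (kmax (Mmat A C) (b0 A C b)) \<mu> x)
    \<and> (\<forall>\<mu> x. rLG_minimizer (Mmat A C) (b0 A C b) (gam C b) (kmax (Mmat A C) (b0 A C b)) \<mu> x \<longrightarrow>
         (let u = Qmul (Mmat A C) (b0 A C b) (kmax (Mmat A C) (b0 A C b)) x in
            LG_solution A C b \<mu> u \<and>
            CRQ_minimizer A C b (u + n0 C b) \<and>
            (\<forall>v. CRQ_minimizer A C b v \<longrightarrow> v = u + n0 C b)))"
proof -
  interpret crq_problem C A b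
    using rankC symA n0_small b0_nz by unfold_locales
  obtain \<mu> u where lg: "qp.lg_feasible \<mu> u" and psd: "qp.shift_psd \<mu>"
    by (rule qp.lg_solution_exists)
  have pd: "qp.shift_pd \<mu>"
    using qp.shift_pd_if_not_hard_case[OF _ lg psd] easy QEP_hard_case_iff
    unfolding QEP_easy_case_def by blast
  note rLG = rLG_minimizer_kmax[OF lg pd]
  show ?thesis
  proof (intro conjI allI impI)
    show "\<exists>\<mu> x. rLG_minimizer (Mmat A C) (b0 A C b) (gam C b) (kmax (Mmat A C) (b0 A C b)) \<mu> x"
      using rLG(1) by blast
  next
    fix \<mu>' x
    assume "rLG_minimizer (Mmat A C) (b0 A C b) (gam C b) (kmax (Mmat A C) (b0 A C b)) \<mu>' x"
    then have "\<mu>' = \<mu>" and "Qmul (Mmat A C) (b0 A C b) (kmax (Mmat A C) (b0 A C b)) x = u"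
      using rLG(2) by auto
    then show "let u = Qmul (Mmat A C) (b0 A C b) (kmax (Mmat A C) (b0 A C b)) x in
        LG_solution A C b \<mu>' u \<and> CRQ_minimizer A C b (u + n0 C b)
        \<and> (\<forall>v. CRQ_minimizer A C b v \<longrightarrow> v = u + n0 C b)"
      using LG_solution_if_shift_psd[OF lg psd] CRQ_minimizer_iff[OF lg pd] by simp
  qed
qed

end
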